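(* Let $P,Q\in\Gamma_n$ and $0<r\le R$ with $r\le p_i/q_i\le R$ for all $i$. Let $s,t\in\mathbb{R}$ with $0\le s\le4$. If $s\ge t$ and $s(t-s+6)\ge4(1+t)$, then $$\Big(\frac{r+1}{2}\Big)^{s-t-1}(sr+4-s)\,\Omega_t(Q\|P)\le\zeta_s(P\|Q)\le\Big(\frac{R+1}{2}\Big)^{s-t-1}(sR+4-s)\,\Omega_t(Q\|P).$$ If $s\le t$ and $s(t-s+6)\le4(1+t)$, then $$\Big(\frac{R+1}{2}\Big)^{s-t-1}(sR+4-s)\,\Omega_t(Q\|P)\le\zeta_s(P\|Q)\le\Big(\frac{r+1}{2}\Big)^{s-t-1}(sr+4-s)\,\Omega_t(Q\|P).$$
   Context: $\Gamma_n=\{P=(p_1,\dots,p_n): p_i>0,\ \sum_i p_i=1\}$, $n\ge2$. For $P,Q\in\Gamma_n$ and $s\in\mathbb{R}$: $\Omega_s(Q\|P)=[s(s-1)]^{-1}\big[\sum_i q_i\big(\frac{p_i+q_i}{2q_i}\big)^s-1\big]$ for $s\ne0,1$; $\Omega_0(Q\|P)=\sum_i q_i\ln\frac{2q_i}{p_i+q_i}$; $\Omega_1(Q\|P)=\sum_i\frac{p_i+q_i}{2}\ln\frac{p_i+q_i}{2q_i}$. $\zeta_s(P\|Q)=(s-1)^{-1}\sum_i(p_i-q_i)\big(\frac{p_i+q_i}{2q_i}\big)^{s-1}$ for $s\ne1$; $\zeta_1(P\|Q)=\sum_i(p_i-q_i)\ln\frac{p_i+q_i}{2q_i}$. *)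

theory Defs
  imports "HOL-Analysis.Analysis"
begin

definition Gamma :: "nat \<Rightarrow> (nat \<Rightarrow> real) set" where
  "Gamma n = {p. (\<forall>i<n. p i > 0) \<and> (\<Sum>i<n. p i) = 1}"

text \<open>Omega_s(Q||P); note the argument order: first argument Q, second P.\<close>
definition Omega :: "nat \<Rightarrow> real \<Rightarrow> (nat \<Rightarrow> real) \<Rightarrow> (nat \<Rightarrow> real) \<Rightarrow> real" where
  "Omega n s q p =
    (if s = 0 then (\<Sum>i<n. q i * ln (2 * q i / (p i + q i)))
     else if s = 1 then (\<Sum>i<n. (p i + q i) / 2 * ln ((p i + q i) / (2 * q i)))
     else ((\<Sum>i<n. q i * ((p i + q i) / (2 * q i)) powr s) - 1) / (s * (s - 1)))"

definition zeta :: "nat \<Rightarrow> real \<Rightarrow> (nat \<Rightarrow> real) \<Rightarrow> (nat \<Rightarrow> real) \<Rightarrow> real" where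
  "zeta n s p q =
    (if s = 1 then (\<Sum>i<n. (p i - q i) * ln ((p i + q i) / (2 * q i)))
     else (\<Sum>i<n. (p i - q i) * ((p i + q i) / (2 * q i)) powr (s - 1)) / (s - 1))"

end

theory Submission
  imports Defs
begin

text \<open>Both quantities are Csiszar f-divergences \<open>\<Sum>i q\<^sub>i f(p\<^sub>i/q\<^sub>i)\<close>, with generators
  \<open>\<phi>\<^sub>t\<close> (for \<open>\<Omega>\<^sub>t\<close>) and \<open>\<psi>\<^sub>s\<close> (for \<open>\<zeta>\<^sub>s\<close>) vanishing at 1, and their second derivatives satisfy
  \<open>\<psi>\<^sub>s'' = g \<phi>\<^sub>t''\<close> with \<open>g(x) = ((x+1)/2)\<^bsup>s-t-1\<^esup>(sx+4-s)\<close> and \<open>\<phi>\<^sub>t'' > 0\<close>.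
  If \<open>m \<le> g \<le> M\<close> on \<open>[r,R]\<close>, then \<open>\<psi>\<^sub>s - m\<phi>\<^sub>t\<close> and \<open>M\<phi>\<^sub>t - \<psi>\<^sub>s\<close> are convex there, so by
  Jensen's inequality (the ratios \<open>p\<^sub>i/q\<^sub>i\<close> have \<open>q\<close>-mean 1) their f-divergences are nonnegative.
  Finally \<open>g'(x) = ((x+1)/2)\<^bsup>s-t-2\<^esup>(s(s-t)x + s(t-s+6) - 4(1+t))/2\<close>, which under either
  pair of conditions on \<open>s, t\<close> has constant sign for \<open>x \<ge> 0\<close>, so the extreme values of \<open>g\<close>
  on \<open>[r,R]\<close> are \<open>g(r)\<close> and \<open>g(R)\<close>.\<close>

definition f_divergence :: "nat \<Rightarrow> (real \<Rightarrow> real) \<Rightarrow> (nat \<Rightarrow> real) \<Rightarrow> (nat \<Rightarrow> real) \<Rightarrow> real"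
  where "f_divergence n f p q = (\<Sum>i<n. q i * f (p i / q i))"

lemma f_divergence_diff:
  "f_divergence n (\<lambda>x. f x - g x) p q = f_divergence n f p q - f_divergence n g p q"
  by (simp add: f_divergence_def right_diff_distrib sum_subtractf)

lemma f_divergence_cmult: "f_divergence n (\<lambda>x. c * f x) p q = c * f_divergence n f p q"
  by (simp add: f_divergence_def sum_distrib_left algebra_simps)

lemma f_divergence_nonneg:
  assumes "convex_on C f" "f 1 = 0" "p \<in> Gamma n" "q \<in> Gamma n" "\<forall>i<n. p i / q i \<in> C"
  shows "0 \<le> f_divergence n f p q"
proof -
  have q: "\<forall>i<n. q i > 0" "(\<Sum>i<n. q i) = 1" and p: "(\<Sum>i<n. p i) = 1"
    using assms(3,4) by (auto simp: Gamma_def)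
  then have "{..<n} \<noteq> {}" by auto
  have "(\<Sum>i<n. q i *\<^sub>R (p i / q i)) = (\<Sum>i<n. p i)"
    using q(1) by (intro sum.cong) auto
  moreover have "f (\<Sum>i<n. q i *\<^sub>R (p i / q i)) \<le> (\<Sum>i<n. q i * f (p i / q i))"
    by (rule convex_on_sum[OF finite_lessThan \<open>{..<n} \<noteq> {}\<close> assms(1) q(2)])
      (use q(1) assms(5) in \<open>auto intro: less_imp_le\<close>)
  ultimately show ?thesis
    using assms(2) p by (simp add: f_divergence_def)
qed

lemma f_divergence_mono_second_derivative:
  assumes "convex C" "p \<in> Gamma n" "q \<in> Gamma n" "\<forall>i<n. p i / q i \<in> C" "g 1 = f 1"
    and "\<And>x. x \<in> C \<Longrightarrow> (f has_real_derivative f' x) (at x)"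
    and "\<And>x. x \<in> C \<Longrightarrow> (f' has_real_derivative f'' x) (at x)"
    and "\<And>x. x \<in> C \<Longrightarrow> (g has_real_derivative g' x) (at x)"
    and "\<And>x. x \<in> C \<Longrightarrow> (g' has_real_derivative g'' x) (at x)"
    and "\<And>x. x \<in> C \<Longrightarrow> g'' x \<le> f'' x"
  shows "f_divergence n g p q \<le> f_divergence n f p q"
proof -
  have "convex_on C (\<lambda>x. f x - g x)"
    by (rule f''_ge0_imp_convex[where f' = "\<lambda>x. f' x - g' x" and f'' = "\<lambda>x. f'' x - g'' x"])
      (use assms in \<open>auto intro: DERIV_diff\<close>)
  then have "0 \<le> f_divergence n (\<lambda>x. f x - g x) p q"
    by (rule f_divergence_nonneg) (use assms in auto)
  then show ?thesis
    by (simp add: f_divergence_diff)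
qed

definition Omega_gen :: "real \<Rightarrow> real \<Rightarrow> real" where
  "Omega_gen t x =
    (if t = 0 then - ln ((x + 1) / 2)
     else if t = 1 then (x + 1) / 2 * ln ((x + 1) / 2)
     else (((x + 1) / 2) powr t - 1) / (t * (t - 1)))"

definition Omega_gen' :: "real \<Rightarrow> real \<Rightarrow> real" where
  "Omega_gen' t x =
    (if t = 0 then - 1 / (x + 1)
     else if t = 1 then (ln ((x + 1) / 2) + 1) / 2
     else ((x + 1) / 2) powr (t - 1) / (2 * (t - 1)))"

definition zeta_gen :: "real \<Rightarrow> real \<Rightarrow> real" where
  "zeta_gen s x =
    (if s = 1 then (x - 1) * ln ((x + 1) / 2)
     else (x - 1) * ((x + 1) / 2) powr (s - 1) / (s - 1))"

definition zeta_gen' :: "real \<Rightarrow> real \<Rightarrow> real" where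
  "zeta_gen' s x =
    (if s = 1 then ln ((x + 1) / 2) + (x - 1) / (x + 1)
     else ((x + 1) / 2) powr (s - 1) / (s - 1) + (x - 1) * ((x + 1) / 2) powr (s - 2) / 2)"

lemma midpoint_ratio_eq: "0 < q \<Longrightarrow> (p + q) / (2 * q) = (p / q + 1) / 2"
  for p q :: real
  by (simp add: field_simps)

lemma zeta_eq_f_divergence:
  assumes "\<forall>i<n. q i > 0"
  shows "zeta n s p q = f_divergence n (zeta_gen s) p q"
proof (cases "s = 1")
  case True
  have "(p i - q i) * ln ((p i + q i) / (2 * q i)) = q i * zeta_gen s (p i / q i)" if "i < n" for i
    using True assms that by (simp add: zeta_gen_def midpoint_ratio_eq field_simps)
  then show ?thesis
    using True by (simp add: zeta_def f_divergence_def)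
next
  case False
  have "(p i - q i) * ((p i + q i) / (2 * q i)) powr (s - 1) / (s - 1)
      = q i * zeta_gen s (p i / q i)" if "i < n" for i
    using False assms that by (simp add: zeta_gen_def midpoint_ratio_eq field_simps)
  then show ?thesis
    using False by (simp add: zeta_def f_divergence_def sum_divide_distrib)
qed

lemma Omega_eq_f_divergence:
  assumes "p \<in> Gamma n" "q \<in> Gamma n"
  shows "Omega n t q p = f_divergence n (Omega_gen t) p q"
proof -
  have p: "\<forall>i<n. p i > 0" and q: "\<forall>i<n. q i > 0" "(\<Sum>i<n. q i) = 1"
    using assms by (auto simp: Gamma_def)
  consider "t = 0" | "t = 1" | "t \<noteq> 0" "t \<noteq> 1" by blast
  then show ?thesis
  proof cases
    case 1
    have "ln (2 * q i / (p i + q i)) = - ln ((p i / q i + 1) / 2)" if "i < n" for i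
    proof -
      have "ln (2 * q i / (p i + q i)) = - ln ((p i + q i) / (2 * q i))"
        using p q that by (simp add: ln_div)
      then show ?thesis
        using q that by (simp add: midpoint_ratio_eq)
    qed
    then show ?thesis
      using 1 by (simp add: Omega_def Omega_gen_def f_divergence_def)
  next
    case 2
    then show ?thesis
      unfolding Omega_def Omega_gen_def f_divergence_def
      by (auto simp: midpoint_ratio_eq field_simps q intro!: sum.cong)
  next
    case 3
    have "(\<Sum>i<n. q i * ((p i + q i) / (2 * q i)) powr t) - 1
        = (\<Sum>i<n. q i * (((p i / q i + 1) / 2) powr t - 1))"
      using q by (simp add: right_diff_distrib sum_subtractf midpoint_ratio_eq)
    then show ?thesis
      using 3 by (simp add: Omega_def Omega_gen_def f_divergence_def sum_divide_distrib)
  qed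
qed

lemma Omega_gen_has_derivative:
  assumes "-1 < x"
  shows "(Omega_gen t has_real_derivative Omega_gen' t x) (at x)"
proof -
  have pos: "0 < (x + 1) / 2"
    using assms by simp
  consider "t = 0" | "t = 1" | "t \<noteq> 0" "t \<noteq> 1"
    by blast
  then show ?thesis
    unfolding Omega_gen_def[abs_def] Omega_gen'_def
    by cases (use pos in simp; (rule derivative_eq_intros refl | simp)+;
        use assms in \<open>simp add: field_simps\<close>)+
qed

lemma Omega_gen'_has_derivative:
  assumes "-1 < x"
  shows "(Omega_gen' t has_real_derivative ((x + 1) / 2) powr (t - 2) / 4) (at x)"
proof -
  have pos: "0 < (x + 1) / 2"
    using assms by simp
  consider "t = 0" | "t = 1" | "t \<noteq> 0" "t \<noteq> 1"
    by blast
  then show ?thesis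
    unfolding Omega_gen'_def[abs_def]
    by cases (use pos in simp; (rule derivative_eq_intros refl | simp)+;
        use assms in \<open>simp add: field_simps powr_minus power2_eq_square\<close>)+
qed

lemma zeta_gen_has_derivative:
  assumes "-1 < x"
  shows "(zeta_gen s has_real_derivative zeta_gen' s x) (at x)"
proof -
  have pos: "0 < (x + 1) / 2"
    using assms by simp
  have powr_step: "((x + 1) / 2) powr (s - 1) = ((x + 1) / 2) powr (s - 2) * ((x + 1) / 2)"
    using powr_add[of "(x + 1) / 2" "s - 2" 1] pos by simp
  show ?thesis
    unfolding zeta_gen_def[abs_def] zeta_gen'_def
    by (cases "s = 1"; use pos in simp; (rule derivative_eq_intros refl | simp)+;
        use assms in \<open>simp add: powr_step field_simps\<close>)
qed

lemma zeta_gen'_has_derivative: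
  assumes "-1 < x"
  shows "(zeta_gen' s has_real_derivative ((x + 1) / 2) powr (s - 3) * (s * x + 4 - s) / 4) (at x)"
proof -
  have pos: "0 < (x + 1) / 2"
    using assms by simp
  have powr_step: "((x + 1) / 2) powr (s - 2) = ((x + 1) / 2) powr (s - 3) * ((x + 1) / 2)"
    using powr_add[of "(x + 1) / 2" "s - 3" 1] pos by simp
  show ?thesis
    unfolding zeta_gen'_def[abs_def]
    by (cases "s = 1"; use pos in simp; (rule derivative_eq_intros refl | simp)+;
        use assms in \<open>simp add: powr_step powr_minus divide_simps,
          simp add: algebra_simps power2_eq_square\<close>)
qed

definition curvature_ratio :: "real \<Rightarrow> real \<Rightarrow> real \<Rightarrow> real" where
  "curvature_ratio s t x = ((x + 1) / 2) powr (s - t - 1) * (s * x + 4 - s)"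

lemma zeta_gen''_eq_curvature_ratio:
  assumes "-1 < x"
  shows "((x + 1) / 2) powr (s - 3) * (s * x + 4 - s) / 4
       = ((x + 1) / 2) powr (t - 2) / 4 * curvature_ratio s t x"
proof -
  have "((x + 1) / 2) powr (s - 3) = ((x + 1) / 2) powr (t - 2) * ((x + 1) / 2) powr (s - t - 1)"
    using assms by (simp add: powr_add[symmetric])
  then show ?thesis
    by (simp add: curvature_ratio_def)
qed

lemma curvature_ratio_has_derivative:
  assumes "-1 < x"
  shows "(curvature_ratio s t has_real_derivative
           ((x + 1) / 2) powr (s - t - 2) / 2 * (s * (s - t) * x + (s * (t - s + 6) - 4 * (1 + t))))
         (at x)"
proof -
  have pos: "0 < (x + 1) / 2"
    using assms by simp
  have "((\<lambda>x. ((x + 1) / 2) powr (s - t - 1)) has_real_derivative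
          (s - t - 1) * ((x + 1) / 2) powr (s - t - 2) / 2) (at x)"
    using pos by (auto intro!: derivative_eq_intros)
  moreover have "((\<lambda>x. s * x + 4 - s) has_real_derivative s) (at x)"
    by (auto intro!: derivative_eq_intros)
  ultimately have "(curvature_ratio s t has_real_derivative
      (s - t - 1) * ((x + 1) / 2) powr (s - t - 2) / 2 * (s * x + 4 - s)
      + s * ((x + 1) / 2) powr (s - t - 1)) (at x)"
    unfolding curvature_ratio_def[abs_def] by (rule DERIV_mult)
  moreover have "((x + 1) / 2) powr (s - t - 1) = ((x + 1) / 2) powr (s - t - 2) * ((x + 1) / 2)"
    using powr_add[of "(x + 1) / 2" "s - t - 2" 1] pos by simp
  moreover have "(s - t - 1) * A / 2 * (s * x + 4 - s) + s * (A * ((x + 1) / 2))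
      = A / 2 * (s * (s - t) * x + (s * (t - s + 6) - 4 * (1 + t)))" for A :: real
    by (simp add: field_simps)
  ultimately show ?thesis
    by (simp only:)
qed

lemma curvature_ratio_mono:
  assumes "0 \<le> a" "a \<le> b" "0 \<le> s" "t \<le> s" "4 * (1 + t) \<le> s * (t - s + 6)"
  shows "curvature_ratio s t a \<le> curvature_ratio s t b"
proof (rule DERIV_nonneg_imp_increasing_open[OF assms(2)])
  fix x assume x: "a < x" "x < b"
  have "0 \<le> s * (s - t) * x"
    using assms x by simp
  then have "0 \<le> ((x + 1) / 2) powr (s - t - 2) / 2 * (s * (s - t) * x + (s * (t - s + 6) - 4 * (1 + t)))"
    using assms(5) by simp
  then show "\<exists>y. (curvature_ratio s t has_real_derivative y) (at x) \<and> 0 \<le> y"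
    using curvature_ratio_has_derivative[of x s t] assms(1) x by auto
next
  show "continuous_on {a..b} (curvature_ratio s t)"
    by (rule has_real_derivative_imp_continuous_on[OF curvature_ratio_has_derivative])
      (use assms(1) in auto)
qed

lemma curvature_ratio_antimono:
  assumes "0 \<le> a" "a \<le> b" "0 \<le> s" "s \<le> t" "s * (t - s + 6) \<le> 4 * (1 + t)"
  shows "curvature_ratio s t b \<le> curvature_ratio s t a"
proof (rule DERIV_nonpos_imp_decreasing_open[OF assms(2)])
  fix x assume x: "a < x" "x < b"
  have "s * (s - t) * x \<le> 0"
    using assms x by (intro mult_nonpos_nonneg mult_nonneg_nonpos) auto
  then have "((x + 1) / 2) powr (s - t - 2) / 2 * (s * (s - t) * x + (s * (t - s + 6) - 4 * (1 + t))) \<le> 0"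
    using assms(5) by (intro mult_nonneg_nonpos) auto
  then show "\<exists>y. (curvature_ratio s t has_real_derivative y) (at x) \<and> y \<le> 0"
    using curvature_ratio_has_derivative[of x s t] assms(1) x by auto
next
  show "continuous_on {a..b} (curvature_ratio s t)"
    by (rule has_real_derivative_imp_continuous_on[OF curvature_ratio_has_derivative])
      (use assms(1) in auto)
qed

lemma zeta_Omega_bounds:
  assumes "p \<in> Gamma n" "q \<in> Gamma n" "-1 < r" "\<forall>i<n. r \<le> p i / q i \<and> p i / q i \<le> R"
    and "\<And>x. r \<le> x \<Longrightarrow> x \<le> R \<Longrightarrow> m \<le> curvature_ratio s t x \<and> curvature_ratio s t x \<le> M"
  shows "m * Omega n t q p \<le> zeta n s p q \<and> zeta n s p q \<le> M * Omega n t q p"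
proof -
  define \<Omega>'' where "\<Omega>'' x = ((x + 1) / 2) powr (t - 2) / 4" for x
  define \<zeta>'' where "\<zeta>'' x = ((x + 1) / 2) powr (s - 3) * (s * x + 4 - s) / 4" for x
  have in_range: "\<forall>i<n. p i / q i \<in> {r..R}"
    using assms(4) by simp
  have gt_minus_one: "-1 < x" if "x \<in> {r..R}" for x
    using assms(3) that by simp
  have \<zeta>''_eq: "\<zeta>'' x = curvature_ratio s t x * \<Omega>'' x" if "x \<in> {r..R}" for x
    using zeta_gen''_eq_curvature_ratio[OF gt_minus_one[OF that]]
    by (simp add: \<zeta>''_def \<Omega>''_def mult.commute)
  have derivs:
    "(Omega_gen t has_real_derivative Omega_gen' t x) (at x)"
    "(Omega_gen' t has_real_derivative \<Omega>'' x) (at x)"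
    "(zeta_gen s has_real_derivative zeta_gen' s x) (at x)"
    "(zeta_gen' s has_real_derivative \<zeta>'' x) (at x)" if "x \<in> {r..R}" for x
    using gt_minus_one[OF that] unfolding \<Omega>''_def \<zeta>''_def
    by (rule Omega_gen_has_derivative Omega_gen'_has_derivative
        zeta_gen_has_derivative zeta_gen'_has_derivative)+
  have \<Omega>''_nonneg: "0 \<le> \<Omega>'' x" for x
    by (simp add: \<Omega>''_def)
  have gen_one: "Omega_gen t 1 = 0" "zeta_gen s 1 = 0"
    by (simp_all add: Omega_gen_def zeta_gen_def)
  have "f_divergence n (\<lambda>x. m * Omega_gen t x) p q \<le> f_divergence n (zeta_gen s) p q"
  proof (rule f_divergence_mono_second_derivative[OF convex_real_interval(5) assms(1,2) in_range,
        where f' = "zeta_gen' s" and g' = "\<lambda>x. m * Omega_gen' t x"])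
    fix x assume x: "x \<in> {r..R}"
    have "m \<le> curvature_ratio s t x"
      using assms(5) x by simp
    then show "m * \<Omega>'' x \<le> \<zeta>'' x"
      unfolding \<zeta>''_eq[OF x] by (rule mult_right_mono[OF _ \<Omega>''_nonneg])
  qed (auto simp: gen_one intro!: DERIV_cmult derivs)
  moreover have "f_divergence n (zeta_gen s) p q \<le> f_divergence n (\<lambda>x. M * Omega_gen t x) p q"
  proof (rule f_divergence_mono_second_derivative[OF convex_real_interval(5) assms(1,2) in_range,
        where f' = "\<lambda>x. M * Omega_gen' t x" and g' = "zeta_gen' s"])
    fix x assume x: "x \<in> {r..R}"
    have "curvature_ratio s t x \<le> M"
      using assms(5) x by simp
    then show "\<zeta>'' x \<le> M * \<Omega>'' x"
      unfolding \<zeta>''_eq[OF x] by (rule mult_right_mono[OF _ \<Omega>''_nonneg])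
  qed (auto simp: gen_one intro!: DERIV_cmult derivs)
  moreover have "\<forall>i<n. q i > 0"
    using assms(2) by (simp add: Gamma_def)
  ultimately show ?thesis
    using assms(1,2)
    by (simp add: Omega_eq_f_divergence zeta_eq_f_divergence f_divergence_cmult)
qed

theorem theorem4p1:
  fixes n :: nat and p q :: "nat \<Rightarrow> real" and r R s t :: real
  assumes "n \<ge> 2"
    and "p \<in> Gamma n" and "q \<in> Gamma n"
    and "0 < r" and "r \<le> R"
    and "\<forall>i<n. r \<le> p i / q i \<and> p i / q i \<le> R"
    and "0 \<le> s" and "s \<le> 4"
  shows "(s \<ge> t \<and> s * (t - s + 6) \<ge> 4 * (1 + t) \<longrightarrow>
           ((r + 1) / 2) powr (s - t - 1) * (s * r + 4 - s) * Omega n t q p \<le> zeta n s p q \<and>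
           zeta n s p q \<le> ((R + 1) / 2) powr (s - t - 1) * (s * R + 4 - s) * Omega n t q p)
       \<and> (s \<le> t \<and> s * (t - s + 6) \<le> 4 * (1 + t) \<longrightarrow>
           ((R + 1) / 2) powr (s - t - 1) * (s * R + 4 - s) * Omega n t q p \<le> zeta n s p q \<and>
           zeta n s p q \<le> ((r + 1) / 2) powr (s - t - 1) * (s * r + 4 - s) * Omega n t q p)"
proof -
  have bounds: "m * Omega n t q p \<le> zeta n s p q \<and> zeta n s p q \<le> M * Omega n t q p"
    if "\<And>x. r \<le> x \<Longrightarrow> x \<le> R \<Longrightarrow> m \<le> curvature_ratio s t x \<and> curvature_ratio s t x \<le> M"
    for m M
    using zeta_Omega_bounds[OF assms(2,3) _ assms(6) that] assms(4) by simp
  have "curvature_ratio s t r \<le> curvature_ratio s t x \<and> curvature_ratio s t x \<le> curvature_ratio s t R"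
    if "t \<le> s" "4 * (1 + t) \<le> s * (t - s + 6)" "r \<le> x" "x \<le> R" for x
    using curvature_ratio_mono[of r x s t] curvature_ratio_mono[of x R s t] that assms(4,7) by simp
  moreover have "curvature_ratio s t R \<le> curvature_ratio s t x \<and> curvature_ratio s t x \<le> curvature_ratio s t r"
    if "s \<le> t" "s * (t - s + 6) \<le> 4 * (1 + t)" "r \<le> x" "x \<le> R" for x
    using curvature_ratio_antimono[of r x s t] curvature_ratio_antimono[of x R s t] that assms(4,7)
    by simp
  ultimately show ?thesis
    unfolding curvature_ratio_def[symmetric] using bounds by blast
qed

end
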